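(* Let $\Omega\subseteq\mathbb R^{d_z}$ be open, connected and aligned-connected, with each projection $\Omega_k:=\{\mathbf z_{B_k}:\mathbf z\in\Omega\}$ contractible. Let $\mathbf f:\Omega\to\mathbb R^{d_x}$ be $C^2$ such that every two distinct slots have at most first-order interaction within $\mathbf f$ on $\Omega$, i.e. $D^2_{i,j}\mathbf f(\mathbf z)=\mathbf 0$ for all $\mathbf z\in\Omega$ whenever $i$ and $j$ lie in different slots. Then there exist functions $\mathbf f^k:\Omega_k\to\mathbb R^{d_x}$ such that $\mathbf f(\mathbf z)=\sum_{k=1}^K\mathbf f^k(\mathbf z_{B_k})$ for all $\mathbf z\in\Omega$.
   Context: Fix a partition $\{B_1,\dots,B_K\}$ of $[d_z]$ into nonempty slots; $\mathbf z_S=(z_i)_{i\in S}$. A set $S\subseteq\mathbb R^{d_z}$ is aligned-connected if for every $k\in[K]$ and every $\mathbf a'\in S$ the set $\{\mathbf a\in S:\mathbf a_{B_k}=\mathbf a'_{B_k}\}$ is path-connected. A subset of Euclidean space is contractible if it is contractible as a topological space with the subspace topology. *)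

theory Defs
  imports "HOL-Analysis.Analysis"
begin

text \<open>The block projection \<open>z_B\<close> is represented by zero-padding the coordinates
  outside \<open>B\<close>; this is a linear isometric embedding of \<open>\<real>^|B|\<close> into \<open>\<real>^d_z\<close>.\<close>
definition proj_block :: "'n::finite set \<Rightarrow> real^'n \<Rightarrow> real^'n" where
  "proj_block B z = (\<chi> i. if i \<in> B then z $ i else 0)"

definition is_slot_partition :: "nat \<Rightarrow> (nat \<Rightarrow> 'n set) \<Rightarrow> bool" where
  "is_slot_partition K B \<longleftrightarrow>
     (\<forall>k<K. B k \<noteq> {}) \<and>
     (\<forall>k<K. \<forall>k'<K. k \<noteq> k' \<longrightarrow> B k \<inter> B k' = {}) \<and>
     (\<Union>k<K. B k) = UNIV"

definition aligned_connected :: "nat \<Rightarrow> (nat \<Rightarrow> 'n::finite set) \<Rightarrow> (real^'n) set \<Rightarrow> bool" where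
  "aligned_connected K B S \<longleftrightarrow>
     (\<forall>k<K. \<forall>a'\<in>S. path_connected {a\<in>S. \<forall>i\<in>B k. a $ i = a' $ i})"

end

theory Submission
  imports Defs
begin

text \<open>Fix a slot \<open>B\<close>. Vanishing mixed derivatives across slots make the partial derivative
  of \<open>f\<close> in directions inside \<open>B\<close> constant on every slice where \<open>z\<^sub>B\<close> is fixed; since these
  aligned fibres are connected, that partial derivative depends on \<open>z\<^sub>B\<close> alone. Near each point
  of \<open>\<Omega>\<^sub>B\<close> it therefore has a primitive, namely \<open>f\<close> with the other slots frozen, and two such
  local primitives differ by a constant on their overlap. Contractibility of \<open>\<Omega>\<^sub>B\<close> removes the
  monodromy: continuing the local primitives along the paths of a contracting homotopy (with
  charts chosen uniformly by compactness) glues them to a global primitive \<open>g\<^sub>B\<close>. Finally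
  \<open>f - \<Sum>\<^sub>B g\<^sub>B(z\<^sub>B)\<close> has zero derivative on the connected set \<open>\<Omega>\<close>, hence is constant.\<close>

section \<open>Gluing local primitives over a contractible set\<close>

definition charts_differ_by_constants ::
    "'a set \<Rightarrow> ('a \<Rightarrow> 'a set) \<Rightarrow> ('a \<Rightarrow> 'a \<Rightarrow> 'b::ab_group_add) \<Rightarrow> bool" where
  "charts_differ_by_constants U T P \<longleftrightarrow>
     (\<forall>x\<in>U. \<forall>y\<in>U. \<exists>d. \<forall>w\<in>U \<inter> T x \<inter> T y. P x w - P y w = d)"

text \<open>Continuation of the local primitives \<open>P x\<close> along a path \<open>\<gamma>\<close> parametrised by \<open>[0,1]\<close>.\<close>
definition chart_lift ::
    "'a set \<Rightarrow> ('a \<Rightarrow> 'a set) \<Rightarrow> ('a \<Rightarrow> 'a \<Rightarrow> 'b::ab_group_add) \<Rightarrow> (real \<Rightarrow> 'a) \<Rightarrow> (real \<Rightarrow> 'b) \<Rightarrow> bool" where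
  "chart_lift U T P \<gamma> \<phi> \<longleftrightarrow>
     (\<forall>t\<in>{0..1}. \<exists>x\<in>U. \<exists>e>0. \<exists>c. \<forall>s\<in>{0..1}. dist s t < e \<longrightarrow> \<gamma> s \<in> U \<inter> T x \<and> \<phi> s = P x (\<gamma> s) + c)"

lemma chart_lift_unique:
  assumes compat: "charts_differ_by_constants U T P"
    and \<phi>: "chart_lift U T P \<gamma> \<phi>" and \<psi>: "chart_lift U T P \<gamma> \<psi>"
    and end_eq: "\<phi> 1 = \<psi> 1" and s: "s \<in> {0..1}"
  shows "\<phi> s = \<psi> s"
proof -
  have "(\<lambda>s. \<phi> s - \<psi> s) 1 = (\<lambda>s. \<phi> s - \<psi> s) s"
  proof (rule connected_local_const[where A="{0..1::real}"])
    show "\<forall>t\<in>{0..1}. eventually (\<lambda>s. \<phi> t - \<psi> t = \<phi> s - \<psi> s) (at t within {0..1})"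
    proof
      fix t :: real assume t: "t \<in> {0..1}"
      obtain x e1 c1 where x: "x \<in> U" "e1 > 0"
        and \<phi>x: "\<forall>s\<in>{0..1}. dist s t < e1 \<longrightarrow> \<gamma> s \<in> U \<inter> T x \<and> \<phi> s = P x (\<gamma> s) + c1"
        using \<phi> t unfolding chart_lift_def by meson
      obtain y e2 c2 where y: "y \<in> U" "e2 > 0"
        and \<psi>y: "\<forall>s\<in>{0..1}. dist s t < e2 \<longrightarrow> \<gamma> s \<in> U \<inter> T y \<and> \<psi> s = P y (\<gamma> s) + c2"
        using \<psi> t unfolding chart_lift_def by meson
      obtain d where d: "\<forall>w\<in>U \<inter> T x \<inter> T y. P x w - P y w = d"
        using compat x(1) y(1) unfolding charts_differ_by_constants_def by blast
      have "\<phi> s - \<psi> s = d + c1 - c2" if "s \<in> {0..1}" "dist s t < min e1 e2" for s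
        using \<phi>x \<psi>y d that by (auto simp: algebra_simps)
      then show "eventually (\<lambda>s. \<phi> t - \<psi> t = \<phi> s - \<psi> s) (at t within {0..1})"
        unfolding eventually_at using x(2) y(2) t by (intro exI[of _ "min e1 e2"]) auto
    qed
  qed (use s in auto)
  then show ?thesis
    using end_eq by simp
qed

lemma chain_pieces_agree:
  fixes s :: real and d :: "nat \<Rightarrow> 'b::ab_group_add"
  assumes cover: "\<And>s j. s \<in> {0..1} \<Longrightarrow> j \<le> n \<Longrightarrow> \<bar>s * n - j\<bar> < 2 \<Longrightarrow> \<gamma> s \<in> U \<inter> T (x j)"
    and d: "\<And>i w. i < n \<Longrightarrow> w \<in> U \<inter> T (x (Suc i)) \<inter> T (x i) \<Longrightarrow> P (x (Suc i)) w - P (x i) w = d i"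
    and s: "s \<in> {0..1}" and j: "j \<le> n" and near: "real j - 1 < s * n" "s * n < real j + 2"
  shows "\<gamma> s \<in> U \<inter> T (x j) \<and>
    P (x (nat \<lfloor>s * n\<rfloor>)) (\<gamma> s) + (\<Sum>i\<in>{nat \<lfloor>s * n\<rfloor>..<n}. d i) = P (x j) (\<gamma> s) + (\<Sum>i\<in>{j..<n}. d i)"
proof -
  define k where "k = nat \<lfloor>s * n\<rfloor>"
  have "0 \<le> s * n" "s * n \<le> n"
    using s by (auto simp: mult_left_le_one_le)
  then have k: "real k \<le> s * n" "s * n < real k + 1" "k \<le> n"
    unfolding k_def by linarith+
  have in_j: "\<gamma> s \<in> U \<inter> T (x j)" and in_k: "\<gamma> s \<in> U \<inter> T (x k)"
    using cover[OF s j] cover[OF s k(3)] near k by linarith+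
  have sum_Suc: "(\<Sum>i\<in>{i..<n}. d i) = d i + (\<Sum>i\<in>{Suc i..<n}. d i)" if "i < n" for i
    using that by (simp add: sum.atLeast_Suc_lessThan)
  have "k = j \<or> k = Suc j \<or> Suc k = j"
    using k near by linarith
  then have "P (x k) (\<gamma> s) + (\<Sum>i\<in>{k..<n}. d i) = P (x j) (\<gamma> s) + (\<Sum>i\<in>{j..<n}. d i)"
  proof (elim disjE)
    assume "k = Suc j"
    then show ?thesis
      using d[of j "\<gamma> s"] sum_Suc[of j] in_j in_k k(3) by (simp add: algebra_simps)
  next
    assume "Suc k = j"
    then show ?thesis
      using d[of k "\<gamma> s"] sum_Suc[of k] in_j in_k j by (auto simp: algebra_simps)
  qed simp
  with in_j show ?thesis
    by (simp add: k_def)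
qed

lemma chain_chart_lift:
  fixes x :: "nat \<Rightarrow> 'a" and d :: "nat \<Rightarrow> 'b::ab_group_add"
  assumes n: "n \<ge> 1"
    and x: "\<And>j. j \<le> n \<Longrightarrow> x j \<in> U"
    and cover: "\<And>s j. s \<in> {0..1} \<Longrightarrow> j \<le> n \<Longrightarrow> \<bar>s * n - j\<bar> < 2 \<Longrightarrow> \<gamma> s \<in> U \<inter> T (x j)"
    and d: "\<And>i w. i < n \<Longrightarrow> w \<in> U \<inter> T (x (Suc i)) \<inter> T (x i) \<Longrightarrow> P (x (Suc i)) w - P (x i) w = d i"
  shows "\<exists>\<phi>. chart_lift U T P \<gamma> \<phi> \<and> \<phi> 1 = 0 \<and>
           \<phi> 0 = P (x 0) (\<gamma> 0) + ((\<Sum>i<n. d i) - P (x n) (\<gamma> 1))"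
proof -
  txt \<open>Chart \<open>x j\<close> is used on \<open>[j/n, (j+1)/n)\<close>; the partial sums of the transition
    constants \<open>d i\<close> make neighbouring pieces agree, normalised by \<open>\<phi> 1 = 0\<close>.\<close>
  define \<phi> where "\<phi> s = P (x (nat \<lfloor>s * n\<rfloor>)) (\<gamma> s) + (\<Sum>i\<in>{nat \<lfloor>s * n\<rfloor>..<n}. d i) - P (x n) (\<gamma> 1)"
    for s :: real
  have "chart_lift U T P \<gamma> \<phi>"
    unfolding chart_lift_def
  proof
    fix t :: real assume t: "t \<in> {0..1}"
    define j where "j = nat \<lfloor>t * n\<rfloor>"
    have "0 \<le> t * n" "t * n \<le> n"
      using t by (auto simp: mult_left_le_one_le)
    then have j: "real j \<le> t * n" "t * n < real j + 1" "j \<le> n"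
      unfolding j_def by linarith+
    have "\<gamma> s \<in> U \<inter> T (x j) \<and> \<phi> s = P (x j) (\<gamma> s) + ((\<Sum>i\<in>{j..<n}. d i) - P (x n) (\<gamma> 1))"
      if s: "s \<in> {0..1}" "dist s t < 1 / n" for s
    proof -
      have "\<bar>s * n - t * n\<bar> < 1"
        using s n by (simp add: dist_real_def less_divide_eq abs_mult flip: left_diff_distrib)
      then have "real j - 1 < s * n" "s * n < real j + 2"
        using j by linarith+
      then show ?thesis
        using chain_pieces_agree[where \<gamma> = \<gamma> and T = T and x = x and P = P, OF cover d s(1) j(3)] by (simp add: \<phi>_def algebra_simps)
    qed
    moreover have "x j \<in> U" "0 < 1 / real n"
      using x j(3) n by auto
    ultimately show "\<exists>x'\<in>U. \<exists>e>0. \<exists>c. \<forall>s\<in>{0..1}. dist s t < e \<longrightarrow> \<gamma> s \<in> U \<inter> T x' \<and> \<phi> s = P x' (\<gamma> s) + c"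
      by blast
  qed
  then show ?thesis
    by (intro exI[of _ \<phi>]) (simp add: \<phi>_def atLeast0LessThan)
qed

lemma homotopy_uniform_chart_cover:
  fixes h :: "real \<times> 'a::metric_space \<Rightarrow> 'a"
  assumes h: "continuous_on ({0..1} \<times> U) h" "h ` ({0..1} \<times> U) \<subseteq> U"
    and T: "\<And>x. x \<in> U \<Longrightarrow> open (T x) \<and> x \<in> T x"
    and w0: "w0 \<in> U"
  obtains \<epsilon> where "\<epsilon> > 0"
    "\<And>t. t \<in> {0..1} \<Longrightarrow> \<exists>x\<in>U. \<forall>s\<in>{0..1}. \<forall>w\<in>U \<inter> ball w0 \<epsilon>. \<bar>s - t\<bar> < \<epsilon> \<longrightarrow> h (s, w) \<in> U \<inter> T x"
proof -
  have "\<exists>V. open V \<and> ({0..1} \<times> U) \<inter> h -` T x = ({0..1} \<times> U) \<inter> V" if "x \<in> U" for x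
    using continuous_openin_preimage_gen[OF h(1), of "T x"] T[OF that] by (auto simp: openin_open)
  then obtain V where V: "\<And>x. x \<in> U \<Longrightarrow> open (V x) \<and> ({0..1} \<times> U) \<inter> h -` T x = ({0..1} \<times> U) \<inter> V x"
    by metis
  have cover: "{0..1::real} \<times> {w0} \<subseteq> \<Union> (V ` U)"
  proof
    fix p assume "p \<in> {0..1::real} \<times> {w0}"
    then have "p \<in> {0..1} \<times> U" "h p \<in> U"
      using w0 h(2) by auto
    then show "p \<in> \<Union> (V ` U)"
      using V[of "h p"] T[of "h p"] by blast
  qed
  have "compact ({0..1::real} \<times> {w0})"
    by (intro compact_Times) auto
  then obtain \<delta> where \<delta>: "\<delta> > 0" "\<And>p. p \<in> {0..1} \<times> {w0} \<Longrightarrow> \<exists>G\<in>V ` U. ball p \<delta> \<subseteq> G"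
    by (rule Heine_Borel_lemma[OF _ cover]) (use V in auto)
  show thesis
  proof (rule that[of "\<delta> / 2"])
    fix t :: real assume t: "t \<in> {0..1}"
    then obtain x where x: "x \<in> U" "ball (t, w0) \<delta> \<subseteq> V x"
      using \<delta>(2)[of "(t, w0)"] by auto
    have "h (s, w) \<in> U \<inter> T x" if "s \<in> {0..1}" "w \<in> U \<inter> ball w0 (\<delta> / 2)" "\<bar>s - t\<bar> < \<delta> / 2" for s w
    proof -
      have "dist (t, w0) (s, w) \<le> dist t s + dist w0 w"
        unfolding dist_Pair_Pair using sqrt_sum_squares_le_sum_abs[of "dist t s" "dist w0 w"] by simp
      also have "\<dots> < \<delta>"
        using that by (simp add: dist_real_def abs_minus_commute)
      finally have "(s, w) \<in> V x"
        using x(2) by auto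
      then show ?thesis
        using V[OF x(1)] h(2) that by auto
    qed
    with x(1) show "\<exists>x\<in>U. \<forall>s\<in>{0..1}. \<forall>w\<in>U \<inter> ball w0 (\<delta> / 2). \<bar>s - t\<bar> < \<delta> / 2 \<longrightarrow> h (s, w) \<in> U \<inter> T x"
      by blast
  qed (use \<delta> in simp)
qed

text \<open>The charts along each path are chosen independently of the path, so the
  constant relating the lift at time 0 to a chart is uniform over the family.\<close>
lemma uniform_chart_lifts:
  assumes compat: "charts_differ_by_constants U T P"
    and \<epsilon>: "\<epsilon> > 0"
    and cover: "\<And>t. t \<in> {0..1} \<Longrightarrow> \<exists>x\<in>U. \<forall>s\<in>{0..1}. \<forall>w\<in>W. \<bar>s - t\<bar> < \<epsilon> \<longrightarrow> \<gamma> w s \<in> U \<inter> T x"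
    and end_point: "\<And>w. w \<in> W \<Longrightarrow> \<gamma> w 1 = a"
  shows "\<exists>x\<in>U. \<exists>c. \<forall>w\<in>W. \<exists>\<phi>. chart_lift U T P (\<gamma> w) \<phi> \<and> \<phi> 1 = 0 \<and>
           \<gamma> w 0 \<in> T x \<and> \<phi> 0 = P x (\<gamma> w 0) + c"
proof -
  obtain X where X: "\<And>t. t \<in> {0..1} \<Longrightarrow> X t \<in> U \<and> (\<forall>s\<in>{0..1}. \<forall>w\<in>W. \<bar>s - t\<bar> < \<epsilon> \<longrightarrow> \<gamma> w s \<in> U \<inter> T (X t))"
    using cover by metis
  obtain n :: nat where n: "real n > 2 / \<epsilon>"
    using reals_Archimedean2 by blast
  moreover have "2 / \<epsilon> > 0"
    using \<epsilon> by simp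
  ultimately have n_pos: "real n > 0"
    by linarith
  then have n1: "n \<ge> 1" and n\<epsilon>: "2 / n < \<epsilon>"
    using n \<epsilon> by (simp_all add: field_simps)
  define x where "x j = X (j / n)" for j :: nat
  have x: "x j \<in> U" if "j \<le> n" for j
    using X[of "j / n"] that n1 by (simp add: x_def)
  obtain D where D: "\<And>y z w. y \<in> U \<Longrightarrow> z \<in> U \<Longrightarrow> w \<in> U \<inter> T y \<inter> T z \<Longrightarrow> P y w - P z w = D y z"
    using compat unfolding charts_differ_by_constants_def by metis
  define c where "c = (\<Sum>i<n. D (x (Suc i)) (x i)) - P (x n) a"
  have "\<exists>\<phi>. chart_lift U T P (\<gamma> w) \<phi> \<and> \<phi> 1 = 0 \<and> \<gamma> w 0 \<in> T (x 0) \<and> \<phi> 0 = P (x 0) (\<gamma> w 0) + c"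
    if w: "w \<in> W" for w
  proof -
    have cover_x: "\<gamma> w s \<in> U \<inter> T (x j)" if "s \<in> {0..1}" "j \<le> n" "\<bar>s * n - j\<bar> < 2" for s :: real and j
    proof -
      have "\<bar>s - j / n\<bar> = \<bar>s * n - j\<bar> / n"
        using n1 by (simp add: field_simps abs_divide)
      also have "\<dots> < 2 / n"
        using that n1 by (simp add: divide_strict_right_mono)
      finally show ?thesis
        using X[of "j / n"] that w n1 n\<epsilon> by (simp add: x_def)
    qed
    have "\<exists>\<phi>. chart_lift U T P (\<gamma> w) \<phi> \<and> \<phi> 1 = 0 \<and> \<phi> 0 = P (x 0) (\<gamma> w 0) + c"
      using chain_chart_lift[of n x U "\<gamma> w" T P "\<lambda>i. D (x (Suc i)) (x i)", OF n1 x cover_x] D x end_point[OF w]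
      by (simp add: c_def)
    moreover have "\<gamma> w 0 \<in> T (x 0)"
      using cover_x[of 0 0] by simp
    ultimately show ?thesis
      by blast
  qed
  then show ?thesis
    using x[of 0] by blast
qed

lemma contractible_glue_charts:
  fixes U :: "'a::metric_space set" and P :: "'a \<Rightarrow> 'a \<Rightarrow> 'b::ab_group_add"
  assumes "contractible U"
    and T: "\<And>x. x \<in> U \<Longrightarrow> open (T x) \<and> x \<in> T x"
    and compat: "charts_differ_by_constants U T P"
  obtains g where "\<And>w0. w0 \<in> U \<Longrightarrow> \<exists>x\<in>U. \<exists>e>0. \<exists>c. \<forall>w\<in>U \<inter> ball w0 e. w \<in> T x \<and> g w = P x w + c"
proof -
  obtain h a where h: "continuous_on ({0..1::real} \<times> U) h" "h ` ({0..1} \<times> U) \<subseteq> U"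
    and h0: "\<forall>w\<in>U. h (0, w) = w" and h1: "\<forall>w\<in>U. h (1, w) = a"
    using \<open>contractible U\<close> by (auto simp: contractible_def homotopic_with image_subset_iff_funcset)
  define lifts where "lifts w \<phi> \<longleftrightarrow> chart_lift U T P (\<lambda>s. h (s, w)) \<phi> \<and> \<phi> 1 = 0" for w \<phi>
  txt \<open>\<open>g w\<close> is the value at time \<open>0\<close>, i.e. at \<open>w\<close>, of the continuation along the contraction
    path \<open>s \<mapsto> h (s, w)\<close> that vanishes at the common end point \<open>a\<close>; continuations are unique.\<close>
  define g where "g w = (SOME \<phi>. lifts w \<phi>) 0" for w
  have g: "g w = \<phi> 0" if "lifts w \<phi>" for w \<phi>
  proof -
    have "lifts w (SOME \<phi>. lifts w \<phi>)"
      using that by (rule someI[where P = "lifts w"])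
    then show ?thesis
      using chart_lift_unique[OF compat] that unfolding g_def lifts_def by fastforce
  qed
  show thesis
  proof (rule that)
    fix w0 assume w0: "w0 \<in> U"
    obtain \<epsilon> where \<epsilon>: "\<epsilon> > 0"
      and cover: "\<And>t. t \<in> {0..1} \<Longrightarrow> \<exists>x\<in>U. \<forall>s\<in>{0..1}. \<forall>w\<in>U \<inter> ball w0 \<epsilon>. \<bar>s - t\<bar> < \<epsilon> \<longrightarrow> h (s, w) \<in> U \<inter> T x"
      using homotopy_uniform_chart_cover[OF h T w0] by blast
    have end_a: "h (1, w) = a" if "w \<in> U \<inter> ball w0 \<epsilon>" for w
      using h1 that by blast
    obtain x c where "x \<in> U"
      and x: "\<forall>w\<in>U \<inter> ball w0 \<epsilon>. \<exists>\<phi>. chart_lift U T P (\<lambda>s. h (s, w)) \<phi> \<and> \<phi> 1 = 0 \<and>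
                h (0, w) \<in> T x \<and> \<phi> 0 = P x (h (0, w)) + c"
      using uniform_chart_lifts[OF compat \<epsilon> cover end_a] by blast
    have "w \<in> T x \<and> g w = P x w + c" if w: "w \<in> U \<inter> ball w0 \<epsilon>" for w
    proof -
      obtain \<phi> where "lifts w \<phi>" "h (0, w) \<in> T x" "\<phi> 0 = P x (h (0, w)) + c"
        using x w unfolding lifts_def by blast
      moreover have "h (0, w) = w"
        using h0 w by blast
      ultimately show ?thesis
        using g by simp
    qed
    with \<open>x \<in> U\<close> \<epsilon> show "\<exists>x\<in>U. \<exists>e>0. \<exists>c. \<forall>w\<in>U \<inter> ball w0 e. w \<in> T x \<and> g w = P x w + c"
      by blast
  qed
qed

section \<open>Block projections\<close>

lemma proj_block_nth [simp]: "proj_block B z $ i = (if i \<in> B then z $ i else 0)"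
  by (simp add: proj_block_def)

lemma linear_proj_block: "linear (proj_block B)"
  by (rule linearI) (auto simp: vec_eq_iff)

lemma bounded_linear_proj_block: "bounded_linear (proj_block B)"
  using linear_proj_block linear_conv_bounded_linear by blast

lemma proj_block_idem [simp]: "proj_block B (proj_block B z) = proj_block B z"
  by (simp add: vec_eq_iff)

lemma proj_block_diff: "proj_block B (z - y) = proj_block B z - proj_block B y"
  by (rule linear_diff[OF linear_proj_block])

lemma proj_block_add: "proj_block B (z + y) = proj_block B z + proj_block B y"
  by (rule linear_add[OF linear_proj_block])

lemma proj_block_eq_iff: "proj_block B c = proj_block B a \<longleftrightarrow> (\<forall>i\<in>B. c $ i = a $ i)"
  by (auto simp: vec_eq_iff)

lemma range_proj_block_iff: "w \<in> range (proj_block B) \<longleftrightarrow> proj_block B w = w"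
  by (metis proj_block_idem rangeE rangeI)

lemma dist_proj_block_le: "dist (proj_block B z) (proj_block B y) \<le> dist z y"
proof -
  have "norm (proj_block B (z - y)) \<le> norm (z - y)"
    unfolding norm_vec_def by (rule L2_set_mono) auto
  then show ?thesis
    by (simp add: dist_norm proj_block_diff)
qed

lemma sum_proj_block_partition:
  assumes "is_slot_partition K B"
  shows "(\<Sum>k<K. proj_block (B k) z) = z"
proof -
  have "(\<Sum>k<K. proj_block (B k) z) $ i = z $ i" for i
  proof -
    obtain k0 where k0: "k0 < K" "i \<in> B k0"
      using assms unfolding is_slot_partition_def by blast
    have "\<forall>k<K. i \<in> B k \<longleftrightarrow> k = k0"
      using assms k0 unfolding is_slot_partition_def by blast
    then have "(\<Sum>k<K. proj_block (B k) z $ i) = (\<Sum>k<K. if k = k0 then z $ i else 0)"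
      by (intro sum.cong) auto
    then show ?thesis
      using k0 by simp
  qed
  then show ?thesis
    by (simp add: vec_eq_iff)
qed

lemma linear_axis_expansion:
  fixes L :: "(real^'n::finite) \<Rightarrow> 'b::real_vector"
  assumes "linear L"
  shows "L x = (\<Sum>i\<in>UNIV. x $ i *\<^sub>R L (axis i 1))"
proof -
  have "L x = L (\<Sum>i\<in>UNIV. x $ i *\<^sub>R axis i 1)"
    using basis_expansion[of x] by (simp add: scalar_mult_eq_scaleR)
  then show ?thesis
    using assms by (simp add: linear_sum linear_scale o_def)
qed

lemma blinfun_vanishes_across_block:
  fixes Q :: "(real^'n::finite) \<Rightarrow> ((real^'n) \<Rightarrow>\<^sub>L 'b::real_normed_vector)"
  assumes "linear Q"
    and across: "\<And>i j. j \<notin> B \<Longrightarrow> i \<in> B \<Longrightarrow> Q (axis j 1) (axis i 1) = 0"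
    and u: "proj_block B u = 0" and v: "proj_block B v = v"
  shows "Q u v = 0"
proof -
  have lin_right: "linear (\<lambda>v. Q w v)" for w
    by (intro bounded_linear.linear blinfun.bounded_linear_right)
  have lin_left: "linear (\<lambda>u. Q u v)"
    using linear_compose[OF assms(1) bounded_linear.linear[OF blinfun.bounded_linear_left]] by (simp add: o_def)
  have v_off: "v $ i = 0" if "i \<notin> B" for i
    using arg_cong[OF v, of "\<lambda>x. x $ i"] that by simp
  have u_on: "u $ j = 0" if "j \<in> B" for j
    using arg_cong[OF u, of "\<lambda>x. x $ j"] that by simp
  have Q_axis_v: "Q (axis j 1) v = 0" if "j \<notin> B" for j
  proof -
    have "Q (axis j 1) v = (\<Sum>i\<in>UNIV. v $ i *\<^sub>R Q (axis j 1) (axis i 1))"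
      by (rule linear_axis_expansion[OF lin_right])
    also have "\<dots> = 0"
      using v_off across[OF that] by (intro sum.neutral) auto
    finally show ?thesis .
  qed
  have "Q u v = (\<Sum>j\<in>UNIV. u $ j *\<^sub>R Q (axis j 1) v)"
    by (rule linear_axis_expansion[OF lin_left])
  also have "\<dots> = 0"
    using u_on Q_axis_v by (intro sum.neutral) auto
  finally show ?thesis .
qed

lemma translate_into_ball:
  fixes x w :: "'a::real_normed_vector"
  assumes "ball z r \<subseteq> \<Omega>" "w \<in> ball x r"
  shows "w + (z - x) \<in> \<Omega>"
proof -
  have "dist z (w + (z - x)) = dist x w"
    by (simp add: dist_norm algebra_simps)
  then show ?thesis
    using assms by auto
qed

lemma shifted_block_has_derivative:
  assumes "(f has_derivative f') (at (proj_block B w + c))"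
  shows "((\<lambda>w. f (proj_block B w + c)) has_derivative (\<lambda>h. f' (proj_block B h))) (at w)"
proof -
  have "((\<lambda>w. proj_block B w + c) has_derivative (\<lambda>h. proj_block B h + 0)) (at w)"
    by (intro has_derivative_add has_derivative_const bounded_linear_imp_has_derivative bounded_linear_proj_block)
  from has_derivative_compose[OF this assms] show ?thesis
    by simp
qed

section \<open>Block primitives and the additive decomposition\<close>

text \<open>Composing with the affine retraction onto the slice turns a derivative that only
  vanishes along the slice into one that vanishes identically.\<close>
lemma block_derivative_constant_on_slice:
  fixes f' :: "(real^'n::finite) \<Rightarrow> ((real^'n) \<Rightarrow>\<^sub>L 'b::real_normed_vector)"
  assumes S: "convex S" "S \<subseteq> \<Omega>" "\<And>u. u \<in> S \<Longrightarrow> proj_block B u = p"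
    and d2: "\<And>z. z \<in> \<Omega> \<Longrightarrow> (f' has_derivative f'' z) (at z)"
    and cross: "\<And>z u. z \<in> \<Omega> \<Longrightarrow> proj_block B u = 0 \<Longrightarrow> f'' z u v = 0"
  shows "\<exists>C. \<forall>u\<in>S. f' u v = C"
proof -
  define \<iota> where "\<iota> u = u + p - proj_block B u" for u
  have \<iota>S: "\<iota> u = u" if "u \<in> S" for u
    using S(3)[OF that] by (simp add: \<iota>_def)
  have "\<exists>C. \<forall>u\<in>S. f' (\<iota> u) v = C"
  proof (rule has_derivative_zero_constant[OF S(1)])
    fix u assume u: "u \<in> S"
    then have u\<Omega>: "\<iota> u \<in> \<Omega>"
      using S(2) \<iota>S by auto
    have "(\<iota> has_derivative (\<lambda>h. h + 0 - proj_block B h)) (at u)"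
      unfolding \<iota>_def[abs_def]
      by (intro has_derivative_diff has_derivative_add has_derivative_ident has_derivative_const
          bounded_linear_imp_has_derivative bounded_linear_proj_block)
    moreover have "(f' has_derivative f'' (\<iota> u)) (at (\<iota> u))"
      using d2 u\<Omega> by blast
    ultimately have "((\<lambda>u. f' (\<iota> u) v) has_derivative (\<lambda>h. f'' (\<iota> u) (h - proj_block B h) v)) (at u)"
      using bounded_linear.has_derivative[OF blinfun.bounded_linear_left has_derivative_compose] by simp
    moreover have "f'' (\<iota> u) (h - proj_block B h) v = 0" for h
      using cross[OF u\<Omega>] by (simp add: proj_block_diff)
    ultimately show "((\<lambda>u. f' (\<iota> u) v) has_derivative (\<lambda>h. 0)) (at u within S)"
      by (simp add: has_derivative_at_withinI)
  qed
  then show ?thesis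
    using \<iota>S by auto
qed

lemma block_derivative_constant_on_fiber:
  fixes f' :: "(real^'n::finite) \<Rightarrow> ((real^'n) \<Rightarrow>\<^sub>L 'b::real_normed_vector)"
  assumes "open \<Omega>"
    and fiber: "path_connected {c\<in>\<Omega>. \<forall>i\<in>B. c $ i = a $ i}"
    and d2: "\<And>z. z \<in> \<Omega> \<Longrightarrow> (f' has_derivative f'' z) (at z)"
    and cross: "\<And>z u. z \<in> \<Omega> \<Longrightarrow> proj_block B u = 0 \<Longrightarrow> f'' z u v = 0"
    and ab: "a \<in> \<Omega>" "b \<in> \<Omega>" "proj_block B a = proj_block B b"
  shows "f' a v = f' b v"
proof -
  define F where "F = {c\<in>\<Omega>. proj_block B c = proj_block B a}"
  have "connected F"
    using path_connected_imp_connected[OF fiber] by (simp add: F_def proj_block_eq_iff)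
  moreover have "a \<in> F" "b \<in> F"
    using ab by (auto simp: F_def)
  moreover have "\<forall>c\<in>F. eventually (\<lambda>c'. f' c v = f' c' v) (at c within F)"
  proof
    fix c assume c: "c \<in> F"
    obtain r where r: "r > 0" "ball c r \<subseteq> \<Omega>"
      using \<open>open \<Omega>\<close> c openE unfolding F_def by blast
    define S where "S = proj_block B -` {proj_block B a} \<inter> ball c r"
    have "convex S"
      unfolding S_def by (intro convex_Int convex_linear_vimage linear_proj_block) auto
    moreover have "S \<subseteq> \<Omega>"
      using r(2) by (auto simp: S_def)
    ultimately have "\<exists>C. \<forall>u\<in>S. f' u v = C"
      by (rule block_derivative_constant_on_slice[OF _ _ _ d2 cross, where p = "proj_block B a"]) (auto simp: S_def)
    then obtain C where C: "\<forall>u\<in>S. f' u v = C"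
      by blast
    have in_S: "c' \<in> S" if "c' \<in> F" "dist c' c < r" for c'
      using that by (auto simp: S_def F_def dist_commute)
    have "f' c v = f' c' v" if "c' \<in> F" "dist c' c < r" for c'
      using C in_S[OF c] in_S[OF that] r(1) by simp
    then show "eventually (\<lambda>c'. f' c v = f' c' v) (at c within F)"
      unfolding eventually_at using r(1) by blast
  qed
  ultimately show ?thesis
    by (rule connected_local_const)
qed

lemma block_charts_differ_by_constants:
  fixes f :: "(real^'n::finite) \<Rightarrow> 'b::real_normed_vector"
  assumes d1: "\<And>z. z \<in> \<Omega> \<Longrightarrow> (f has_derivative f' z) (at z)"
    and fiber: "\<And>a b v. a \<in> \<Omega> \<Longrightarrow> b \<in> \<Omega> \<Longrightarrow> proj_block B a = proj_block B b \<Longrightarrow>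
                  proj_block B v = v \<Longrightarrow> f' a v = f' b v"
    and lift: "\<And>x. x \<in> U \<Longrightarrow> proj_block B (\<zeta> x) = x \<and> ball (\<zeta> x) (r x) \<subseteq> \<Omega>"
    and U: "U \<subseteq> range (proj_block B)"
  shows "charts_differ_by_constants U (\<lambda>x. ball x (r x)) (\<lambda>x w. f (proj_block B w + (\<zeta> x - x)))"
  unfolding charts_differ_by_constants_def
proof (intro ballI)
  fix x y assume x: "x \<in> U" and y: "y \<in> U"
  define S where "S = range (proj_block B) \<inter> ball x (r x) \<inter> ball y (r y)"
  have chart: "w + (\<zeta> p - p) \<in> \<Omega> \<and> proj_block B (w + (\<zeta> p - p)) = w \<and>
      ((\<lambda>w. f (proj_block B w + (\<zeta> p - p))) has_derivative (\<lambda>h. f' (w + (\<zeta> p - p)) (proj_block B h))) (at w)"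
    if "p \<in> U" "w \<in> range (proj_block B)" "w \<in> ball p (r p)" for p w
  proof (intro conjI)
    show in_\<Omega>: "w + (\<zeta> p - p) \<in> \<Omega>"
      using translate_into_ball[OF _ that(3)] lift[OF that(1)] by blast
    have "proj_block B p = p"
      using U that(1) range_proj_block_iff by blast
    then show "proj_block B (w + (\<zeta> p - p)) = w"
      using lift[OF that(1)] that(2) by (simp add: proj_block_add proj_block_diff range_proj_block_iff)
    show "((\<lambda>w. f (proj_block B w + (\<zeta> p - p))) has_derivative (\<lambda>h. f' (w + (\<zeta> p - p)) (proj_block B h))) (at w)"
      using shifted_block_has_derivative[of f _ B w] d1[OF in_\<Omega>] that(2)
      by (simp add: range_proj_block_iff)
  qed
  have "\<exists>d. \<forall>w\<in>S. f (proj_block B w + (\<zeta> x - x)) - f (proj_block B w + (\<zeta> y - y)) = d"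
  proof (rule has_derivative_zero_constant)
    show "convex S"
      unfolding S_def by (intro convex_Int convex_ball convex_linear_image[OF linear_proj_block]) auto
    fix w assume "w \<in> S"
    then have w: "w \<in> range (proj_block B)" "w \<in> ball x (r x)" "w \<in> ball y (r y)"
      by (auto simp: S_def)
    have "f' (w + (\<zeta> x - x)) (proj_block B h) = f' (w + (\<zeta> y - y)) (proj_block B h)" for h
      using chart[OF x w(1,2)] chart[OF y w(1,3)] by (intro fiber) auto
    then show "((\<lambda>w. f (proj_block B w + (\<zeta> x - x)) - f (proj_block B w + (\<zeta> y - y))) has_derivative (\<lambda>h. 0)) (at w within S)"
      using has_derivative_diff[OF chart[OF x w(1,2), THEN conjunct2, THEN conjunct2]
          chart[OF y w(1,3), THEN conjunct2, THEN conjunct2]]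
      by (simp add: has_derivative_at_withinI)
  qed
  moreover have "U \<inter> ball x (r x) \<inter> ball y (r y) \<subseteq> S"
    using U by (auto simp: S_def)
  ultimately show "\<exists>d. \<forall>w\<in>U \<inter> ball x (r x) \<inter> ball y (r y).
      f (proj_block B w + (\<zeta> x - x)) - f (proj_block B w + (\<zeta> y - y)) = d"
    by blast
qed

lemma block_primitive_from_local_chart:
  fixes f :: "(real^'n::finite) \<Rightarrow> 'b::real_normed_vector"
  assumes d1: "\<And>z. z \<in> \<Omega> \<Longrightarrow> (f has_derivative f' z) (at z)"
    and fiber: "\<And>a b v. a \<in> \<Omega> \<Longrightarrow> b \<in> \<Omega> \<Longrightarrow> proj_block B a = proj_block B b \<Longrightarrow>
                  proj_block B v = v \<Longrightarrow> f' a v = f' b v"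
    and z0: "z0 \<in> \<Omega>" and shift: "proj_block B z0 + s \<in> \<Omega>" "proj_block B s = 0"
    and "e > 0" and glued: "\<And>z. z \<in> ball z0 e \<Longrightarrow> g (proj_block B z) = f (proj_block B z + s) + c"
  shows "((\<lambda>z. g (proj_block B z)) has_derivative (\<lambda>h. f' z0 (proj_block B h))) (at z0)"
proof -
  have "f' (proj_block B z0 + s) (proj_block B h) = f' z0 (proj_block B h)" for h
    using fiber[OF shift(1) z0] shift(2) by (simp add: proj_block_add)
  then have "((\<lambda>z. f (proj_block B z + s) + c) has_derivative (\<lambda>h. f' z0 (proj_block B h))) (at z0)"
    using has_derivative_add_const[OF shifted_block_has_derivative[OF d1[OF shift(1)]]] by simp
  then show ?thesis
    by (rule has_derivative_transform_within_open[where s = "ball z0 e"]) (use \<open>e > 0\<close> glued in auto)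
qed

lemma block_primitive:
  fixes f :: "(real^'n::finite) \<Rightarrow> 'b::real_normed_vector"
  assumes "open \<Omega>" and contr: "contractible (proj_block B ` \<Omega>)"
    and d1: "\<And>z. z \<in> \<Omega> \<Longrightarrow> (f has_derivative f' z) (at z)"
    and fiber: "\<And>a b v. a \<in> \<Omega> \<Longrightarrow> b \<in> \<Omega> \<Longrightarrow> proj_block B a = proj_block B b \<Longrightarrow>
                  proj_block B v = v \<Longrightarrow> f' a v = f' b v"
  obtains g where
    "\<And>z. z \<in> \<Omega> \<Longrightarrow> ((\<lambda>z. g (proj_block B z)) has_derivative (\<lambda>h. f' z (proj_block B h))) (at z)"
proof -
  define U where "U = proj_block B ` \<Omega>"
  have "\<exists>z r. z \<in> \<Omega> \<and> proj_block B z = x \<and> r > 0 \<and> ball z r \<subseteq> \<Omega>" if x: "x \<in> U" for x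
  proof -
    obtain z where z: "z \<in> \<Omega>" "proj_block B z = x"
      using x unfolding U_def by blast
    moreover obtain r where "r > 0" "ball z r \<subseteq> \<Omega>"
      using \<open>open \<Omega>\<close> z(1) openE by blast
    ultimately show ?thesis
      by blast
  qed
  then obtain \<zeta> r where lift: "\<And>x. x \<in> U \<Longrightarrow> \<zeta> x \<in> \<Omega> \<and> proj_block B (\<zeta> x) = x \<and> r x > 0 \<and> ball (\<zeta> x) (r x) \<subseteq> \<Omega>"
    by metis
  define P where "P x w = f (proj_block B w + (\<zeta> x - x))" for x w
  have compat: "charts_differ_by_constants U (\<lambda>x. ball x (r x)) P"
    unfolding P_def using lift by (intro block_charts_differ_by_constants[OF d1 fiber]) (auto simp: U_def)
  have charts_open: "open (ball x (r x)) \<and> x \<in> ball x (r x)" if "x \<in> U" for x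
    using lift[OF that] by simp
  obtain g where g: "\<And>w0. w0 \<in> U \<Longrightarrow> \<exists>x\<in>U. \<exists>e>0. \<exists>c. \<forall>w\<in>U \<inter> ball w0 e. w \<in> ball x (r x) \<and> g w = P x w + c"
    using contractible_glue_charts[OF contr[folded U_def] charts_open compat] by blast
  show thesis
  proof (rule that)
    fix z0 assume z0: "z0 \<in> \<Omega>"
    then obtain x e c where x: "x \<in> U" "e > 0" and near: "\<forall>w\<in>U \<inter> ball (proj_block B z0) e. w \<in> ball x (r x) \<and> g w = P x w + c"
      using g[of "proj_block B z0"] unfolding U_def by blast
    obtain \<rho> where \<rho>: "\<rho> > 0" "ball z0 \<rho> \<subseteq> \<Omega>"
      using \<open>open \<Omega>\<close> z0 openE by blast
    have "proj_block B z \<in> U \<inter> ball (proj_block B z0) e" if "z \<in> ball z0 (min e \<rho>)" for z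
      using that \<rho> dist_proj_block_le[of B z0 z] unfolding U_def by auto
    then have glued: "g (proj_block B z) = f (proj_block B z + (\<zeta> x - x)) + c" if "z \<in> ball z0 (min e \<rho>)" for z
      using near that by (simp add: P_def)
    have "proj_block B z0 \<in> ball x (r x)"
      using near z0 x(2) unfolding U_def by auto
    then have "proj_block B z0 + (\<zeta> x - x) \<in> \<Omega>"
      using translate_into_ball lift[OF x(1)] by blast
    moreover have "proj_block B (\<zeta> x - x) = 0"
      using lift[OF x(1)] x(1) unfolding U_def by (auto simp: proj_block_diff)
    ultimately show "((\<lambda>z. g (proj_block B z)) has_derivative (\<lambda>h. f' z0 (proj_block B h))) (at z0)"
      using glued x(2) \<rho>(1)
      by (intro block_primitive_from_local_chart[OF d1 fiber z0, where s = "\<zeta> x - x" and e = "min e \<rho>"]) auto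
  qed
qed

lemma additive_decomposition_from_block_primitives:
  fixes f :: "(real^'n::finite) \<Rightarrow> 'b::real_normed_vector"
  assumes partition: "is_slot_partition K B"
    and "open \<Omega>" "connected \<Omega>"
    and d1: "\<And>z. z \<in> \<Omega> \<Longrightarrow> (f has_derivative f' z) (at z)"
    and G: "\<And>k z. k < K \<Longrightarrow> z \<in> \<Omega> \<Longrightarrow>
              ((\<lambda>z. G k (proj_block (B k) z)) has_derivative (\<lambda>h. f' z (proj_block (B k) h))) (at z)"
  shows "\<exists>fk. \<forall>z\<in>\<Omega>. f z = (\<Sum>k<K. fk k (proj_block (B k) z))"
proof (cases "\<Omega> = {}")
  case False
  then obtain z1 where z1: "z1 \<in> \<Omega>"
    by blast
  define H where "H z = f z - (\<Sum>k<K. G k (proj_block (B k) z))" for z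
  have "(H has_derivative (\<lambda>h. f' z h - (\<Sum>k<K. f' z (proj_block (B k) h)))) (at z)" if "z \<in> \<Omega>" for z
    unfolding H_def using that by (intro has_derivative_diff d1 has_derivative_sum G) auto
  moreover have "f' z h - (\<Sum>k<K. f' z (proj_block (B k) h)) = 0" if "z \<in> \<Omega>" for z h
    using linear_sum[OF has_derivative_linear[OF d1[OF that]], of "\<lambda>k. proj_block (B k) h" "{..<K}"]
    by (simp add: sum_proj_block_partition[OF partition])
  ultimately have "(H has_derivative (\<lambda>h. 0)) (at z)" if "z \<in> \<Omega>" for z
    using that by simp
  then have "H z = H z1" if "z \<in> \<Omega>" for z
    using has_derivative_zero_unique_connected[OF \<open>open \<Omega>\<close> \<open>connected \<Omega>\<close> _ that z1] by blast
  moreover have "f z = (\<Sum>k<K. G k (proj_block (B k) z)) + H z" for z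
    by (simp add: H_def)
  ultimately have H_const: "f z = (\<Sum>k<K. G k (proj_block (B k) z)) + H z1" if "z \<in> \<Omega>" for z
    using that by metis
  have "K > 0"
  proof (rule ccontr)
    assume "\<not> K > 0"
    then have "(\<Union>k<K. B k) = {}"
      by simp
    then show False
      using partition unfolding is_slot_partition_def by simp
  qed
  then have "(\<Sum>k<K. G k (proj_block (B k) z) + (if k = 0 then H z1 else 0)) =
      (\<Sum>k<K. G k (proj_block (B k) z)) + H z1" for z
    by (simp add: sum.distrib)
  then have "f z = (\<Sum>k<K. G k (proj_block (B k) z) + (if k = 0 then H z1 else 0))" if "z \<in> \<Omega>" for z
    using H_const[OF that] by simp
  then show ?thesis
    by (intro exI[of _ "\<lambda>k w. G k w + (if k = 0 then H z1 else 0)"]) blast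
qed simp

lemma slot_derivative_invariant_on_fibers:
  fixes f' :: "(real^'n::finite) \<Rightarrow> ((real^'n) \<Rightarrow>\<^sub>L 'b::real_normed_vector)"
    and f'' :: "(real^'n) \<Rightarrow> ((real^'n) \<Rightarrow>\<^sub>L ((real^'n) \<Rightarrow>\<^sub>L 'b))"
  assumes partition: "is_slot_partition K B" and "open \<Omega>"
    and aligned: "aligned_connected K B \<Omega>"
    and d2: "\<And>z. z \<in> \<Omega> \<Longrightarrow> (f' has_derivative f'' z) (at z)"
    and interaction: "\<forall>z\<in>\<Omega>. \<forall>k<K. \<forall>k'<K. k \<noteq> k' \<longrightarrow>
         (\<forall>i\<in>B k. \<forall>j\<in>B k'. f'' z (axis i 1) (axis j 1) = 0)"
    and k: "k < K" and ab: "a \<in> \<Omega>" "b \<in> \<Omega>" "proj_block (B k) a = proj_block (B k) b"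
    and v: "proj_block (B k) v = v"
  shows "f' a v = f' b v"
proof (rule block_derivative_constant_on_fiber[where f'' = "\<lambda>z. blinfun_apply (f'' z)", OF \<open>open \<Omega>\<close> _ d2 _ ab])
  show "path_connected {c \<in> \<Omega>. \<forall>i\<in>B k. c $ i = a $ i}"
    using aligned k ab(1) unfolding aligned_connected_def by blast
  show "f'' z u v = 0" if z: "z \<in> \<Omega>" and u: "proj_block (B k) u = 0" for z u
  proof (rule blinfun_vanishes_across_block[OF _ _ u v])
    show "linear (blinfun_apply (f'' z))"
      by (rule bounded_linear.linear[OF blinfun.bounded_linear_right])
    fix i j assume "j \<notin> B k" "i \<in> B k"
    moreover obtain k' where "k' < K" "j \<in> B k'"
      using partition unfolding is_slot_partition_def by blast
    ultimately show "f'' z (axis j 1) (axis i 1) = 0"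
      using interaction z k by metis
  qed
qed

theorem mainTheorem4:
  fixes K :: nat and B :: "nat \<Rightarrow> 'n::finite set"
    and \<Omega> :: "(real^'n) set"
    and f :: "real^'n \<Rightarrow> real^'m::finite"
    and f' :: "real^'n \<Rightarrow> ((real^'n) \<Rightarrow>\<^sub>L (real^'m))"
    and f'' :: "real^'n \<Rightarrow> ((real^'n) \<Rightarrow>\<^sub>L ((real^'n) \<Rightarrow>\<^sub>L (real^'m)))"
  assumes partition: "is_slot_partition K B"
    and open_\<Omega>: "open \<Omega>" and conn: "connected \<Omega>"
    and aligned: "aligned_connected K B \<Omega>"
    and contr: "\<forall>k<K. contractible (proj_block (B k) ` \<Omega>)"
    and d1: "\<forall>z\<in>\<Omega>. (f has_derivative blinfun_apply (f' z)) (at z)"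
    and d2: "\<forall>z\<in>\<Omega>. (f' has_derivative blinfun_apply (f'' z)) (at z)"
    and c2: "continuous_on \<Omega> f''"
    and interaction: "\<forall>z\<in>\<Omega>. \<forall>k<K. \<forall>k'<K. k \<noteq> k' \<longrightarrow>
         (\<forall>i\<in>B k. \<forall>j\<in>B k'. f'' z (axis i 1) (axis j 1) = 0)"
  shows "\<exists>fk :: nat \<Rightarrow> real^'n \<Rightarrow> real^'m.
           \<forall>z\<in>\<Omega>. f z = (\<Sum>k<K. fk k (proj_block (B k) z))"
proof -
  have d1': "\<And>z. z \<in> \<Omega> \<Longrightarrow> (f has_derivative f' z) (at z)"
    using d1 by blast
  have d2': "\<And>z. z \<in> \<Omega> \<Longrightarrow> (f' has_derivative f'' z) (at z)"
    using d2 by blast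
  have "\<exists>g. \<forall>z\<in>\<Omega>. ((\<lambda>z. g (proj_block (B k) z)) has_derivative (\<lambda>h. f' z (proj_block (B k) h))) (at z)"
    if k: "k < K" for k
  proof -
    obtain g where "\<And>z. z \<in> \<Omega> \<Longrightarrow>
        ((\<lambda>z. g (proj_block (B k) z)) has_derivative (\<lambda>h. f' z (proj_block (B k) h))) (at z)"
      using block_primitive[OF open_\<Omega> contr[rule_format, OF k] d1'
          slot_derivative_invariant_on_fibers[OF partition open_\<Omega> aligned d2' interaction k]]
      by blast
    then show ?thesis
      by blast
  qed
  then obtain G where "\<forall>k<K. \<forall>z\<in>\<Omega>. ((\<lambda>z. G k (proj_block (B k) z)) has_derivative (\<lambda>h. f' z (proj_block (B k) h))) (at z)"
    by metis
  then show ?thesis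
    using additive_decomposition_from_block_primitives[OF partition open_\<Omega> conn d1'] by blast
qed

end
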